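(* Let $X=\ell_\infty^{(3)}$ over $\mathbb{C}$, $V=\{z\in X: z_1+z_2+z_3=0\}$, and define $P:X\to V$ by $Pz=z-\frac{z_1+z_2+z_3}{3}(1,1,1)$. Then $P\in\mathcal{P}(X,V)$, $\|P\|_w=\|P\|=4/3$, and $P$ has minimal numerical radius among all elements of $\mathcal{P}(X,V)$. However, $P$ is not a strongly unique minimal projection with respect to the numerical radius: there is no $r>0$ such that $\|Q\|_w\ge\|P\|_w+r\|Q-P\|_w$ for all $Q\in\mathcal{P}(X,V)$ (equivalently, $0$ is not a strongly unique best approximation to $P$ in $B_V(X,V)=\{L\in B(X,V):L|_V=0\}$ with respect to $\|\cdot\|_w$).
   Context: $\ell_\infty^{(3)}$ is $\mathbb{C}^3$ with the max norm. $\mathcal{P}(X,V)$ is the set of linear projections from $X$ onto $V$ (linear $Q:X\to V$ with $Qv=v$ for $v\in V$). For an operator $T$ on $X$, $\|T\|$ is the operator norm and $\|T\|_w=\sup\{|x^*(Tx)|:x\in S_X,x^*\in S_{X^*},x^*(x)=1\}$ the numerical radius. *)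

theory Defs
  imports "HOL-Analysis.Analysis"
begin

text \<open>X = ell_infinity^(3) over C: vectors in complex^3 with the max norm.
  Its dual is ell_1^(3) via the bilinear pairing (sum i. y_i x_i).\<close>

definition linf :: "complex ^ 3 \<Rightarrow> real" where
  "linf x = Max (range (\<lambda>i. cmod (x $ i)))"

definition l1 :: "complex ^ 3 \<Rightarrow> real" where
  "l1 y = (\<Sum>i\<in>UNIV. cmod (y $ i))"

definition pairing :: "complex ^ 3 \<Rightarrow> complex ^ 3 \<Rightarrow> complex" where
  "pairing y x = (\<Sum>i\<in>UNIV. y $ i * x $ i)"

definition is_clinear :: "(complex ^ 3 \<Rightarrow> complex ^ 3) \<Rightarrow> bool" where
  "is_clinear T \<longleftrightarrow> (\<forall>x y. T (x + y) = T x + T y) \<and> (\<forall>c x. T (c *s x) = c *s T x)"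

definition opnorm :: "(complex ^ 3 \<Rightarrow> complex ^ 3) \<Rightarrow> real" where
  "opnorm T = (SUP x\<in>{x. linf x = 1}. linf (T x))"

definition numrad :: "(complex ^ 3 \<Rightarrow> complex ^ 3) \<Rightarrow> real" where
  "numrad T = (SUP p\<in>{(x, y). linf x = 1 \<and> l1 y = 1 \<and> pairing y x = 1}.
                  cmod (pairing (snd p) (T (fst p))))"

definition Vsub :: "(complex ^ 3) set" where
  "Vsub = {z. z $ 1 + z $ 2 + z $ 3 = 0}"

definition projs :: "(complex ^ 3 \<Rightarrow> complex ^ 3) set" where
  "projs = {Q. is_clinear Q \<and> (\<forall>x. Q x \<in> Vsub) \<and> (\<forall>v\<in>Vsub. Q v = v)}"

definition Pproj :: "complex ^ 3 \<Rightarrow> complex ^ 3" where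
  "Pproj z = z - ((z $ 1 + z $ 2 + z $ 3) / 3) *s (\<chi> i. 1)"

end

theory Submission imports Defs begin

text \<open>Every projection onto V has the form Q_w z = P z + (z_1 + z_2 + z_3)/3 w with w = Q(1,1,1) in V.
  Testing Q_w on the vector with k-th coordinate 1 and the others -1 against the k-th coordinate
  functional gives 4/3 - w_k/3; the real parts of these three values average to 4/3 because
  w_1 + w_2 + w_3 = 0, so every projection has numerical radius at least ||P|| = 4/3.
  For purely imaginary w, however, each row of Q_w has l_1-norm 4/3 + O(||w||^2),
  whereas the numerical radius of Q_w - P is at least ||w||; so no linear strong-uniqueness
  estimate can hold.\<close>

lemma linf_component_le: "cmod (x $ i) \<le> linf x"
  unfolding linf_def by (rule Max_ge) auto

lemma linf_leI: "(\<And>i. cmod (x $ i) \<le> B) \<Longrightarrow> linf x \<le> B"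
  unfolding linf_def by (subst Max_le_iff) auto

lemma linf_ones: "linf (\<chi> i. 1) = 1"
  using linf_component_le[of "\<chi> i. 1" 1] linf_leI[of "\<chi> i. 1" 1] by simp

lemma cmod_pairing_le: "cmod (pairing y z) \<le> l1 y * linf z"
proof -
  have "cmod (pairing y z) \<le> (\<Sum>i\<in>UNIV. cmod (y $ i * z $ i))"
    unfolding pairing_def by (rule norm_sum)
  also have "\<dots> \<le> (\<Sum>i\<in>UNIV. cmod (y $ i) * linf z)"
    by (rule sum_mono) (simp add: norm_mult mult_left_mono linf_component_le)
  also have "\<dots> = l1 y * linf z"
    unfolding l1_def by (simp add: sum_distrib_right)
  finally show ?thesis .
qed

lemma l1_axis: "l1 (axis k 1) = 1"
  unfolding l1_def axis_def by (simp add: if_distrib cong: if_cong)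

lemma pairing_axis: "pairing (axis k 1) z = z $ k"
  unfolding pairing_def axis_def by (simp add: if_distrib[of "\<lambda>c. c * _"] cong: if_cong)

lemma numrad_le:
  assumes "\<And>x. linf x = 1 \<Longrightarrow> linf (T x) \<le> B"
  shows "numrad T \<le> B"
  unfolding numrad_def
proof (rule cSUP_least)
  show "{(x, y). linf x = 1 \<and> l1 y = 1 \<and> pairing y x = 1} \<noteq> {}"
    using linf_ones l1_axis pairing_axis[of 1 "\<chi> i. 1"] by fastforce
next
  fix p assume "p \<in> {(x, y). linf x = 1 \<and> l1 y = 1 \<and> pairing y x = 1}"
  then show "cmod (pairing (snd p) (T (fst p))) \<le> B"
    using cmod_pairing_le[of "snd p" "T (fst p)"] assms[of "fst p"] by auto
qed

text \<open>The unit vector x and the coordinate functional e_k with x_k = 1 form a point of the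
  numerical range. The bound B only serves to make the supremum finite.\<close>
lemma numrad_ge_component:
  assumes "\<And>x. linf x = 1 \<Longrightarrow> linf (T x) \<le> B" and "linf x = 1" and "x $ k = 1"
  shows "cmod (T x $ k) \<le> numrad T"
proof -
  have "bdd_above ((\<lambda>p. cmod (pairing (snd p) (T (fst p))))
          ` {(x, y). linf x = 1 \<and> l1 y = 1 \<and> pairing y x = 1})"
  proof (rule bdd_aboveI2)
    fix p assume "p \<in> {(x, y). linf x = 1 \<and> l1 y = 1 \<and> pairing y x = 1}"
    then show "cmod (pairing (snd p) (T (fst p))) \<le> B"
      using cmod_pairing_le[of "snd p" "T (fst p)"] assms(1)[of "fst p"] by auto
  qed
  from cSUP_upper[OF _ this, of "(x, axis k 1)"] show ?thesis
    using assms(2,3) by (simp add: numrad_def l1_axis pairing_axis)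
qed

lemma opnorm_le: "(\<And>x. linf x = 1 \<Longrightarrow> linf (T x) \<le> B) \<Longrightarrow> opnorm T \<le> B"
  unfolding opnorm_def by (rule cSUP_least) (use linf_ones in auto)

lemma opnorm_ge:
  "(\<And>x. linf x = 1 \<Longrightarrow> linf (T x) \<le> B) \<Longrightarrow> linf x = 1 \<Longrightarrow> linf (T x) \<le> opnorm T"
  unfolding opnorm_def by (rule cSUP_upper) (auto intro!: bdd_aboveI2)

lemma cmod_Complex_le: "a \<noteq> 0 \<Longrightarrow> cmod (Complex a t) \<le> \<bar>a\<bar> + t\<^sup>2 / (2 * \<bar>a\<bar>)"
  unfolding complex_norm
proof (rule real_le_lsqrt)
  assume "a \<noteq> 0"
  then have "2 * \<bar>a\<bar> * (t\<^sup>2 / (2 * \<bar>a\<bar>)) = t\<^sup>2" by simp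
  then have "(\<bar>a\<bar> + t\<^sup>2 / (2 * \<bar>a\<bar>))\<^sup>2 = a\<^sup>2 + t\<^sup>2 + (t\<^sup>2 / (2 * \<bar>a\<bar>))\<^sup>2"
    by (simp add: power2_sum mult.assoc)
  then show "a\<^sup>2 + t\<^sup>2 \<le> (\<bar>a\<bar> + t\<^sup>2 / (2 * \<bar>a\<bar>))\<^sup>2" by simp
qed simp_all

definition coord_sum :: "complex ^ 3 \<Rightarrow> complex" where
  "coord_sum z = z $ 1 + z $ 2 + z $ 3"

lemma coord_sum_le:
  assumes "linf x \<le> 1" shows "cmod (coord_sum x) \<le> 3"
proof -
  have "cmod (coord_sum x) \<le> cmod (x $ 1 + x $ 2) + cmod (x $ 3)"
    unfolding coord_sum_def by (rule norm_triangle_ineq)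
  also have "\<dots> \<le> cmod (x $ 1) + cmod (x $ 2) + cmod (x $ 3)"
    using norm_triangle_ineq by simp
  finally have "cmod (coord_sum x) \<le> cmod (x $ 1) + cmod (x $ 2) + cmod (x $ 3)" .
  with assms show ?thesis
    using linf_component_le[of x 1] linf_component_le[of x 2] linf_component_le[of x 3] by linarith
qed

lemma coord_sum_minus_component_le:
  assumes "linf x \<le> 1" shows "cmod (coord_sum x - x $ i) \<le> 2"
proof -
  have b: "cmod (x $ j) \<le> 1" for j
    using linf_component_le[of x j] assms by linarith
  have "cmod (x $ j + x $ l) \<le> 2" for j l
    using norm_triangle_ineq[of "x $ j" "x $ l"] b[of j] b[of l] by linarith
  moreover have "i = 1 \<or> i = 2 \<or> i = 3" using exhaust_3 by blast
  ultimately show ?thesis by (auto simp: coord_sum_def)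
qed

text \<open>Writing z_i + c (z_1 + z_2 + z_3) as (1 + c) z_i + c (sum of the other two coordinates)
  shows that the l_1-norm |1 + c| + 2|c| of this row bounds it on the unit ball.\<close>
lemma component_plus_coord_sum_le:
  assumes "linf x \<le> 1"
  shows "cmod (x $ i + coord_sum x * c) \<le> cmod (1 + c) + 2 * cmod c"
proof -
  have "x $ i + coord_sum x * c = (1 + c) * x $ i + c * (coord_sum x - x $ i)"
    by (simp add: algebra_simps)
  then have "cmod (x $ i + coord_sum x * c)
      \<le> cmod (1 + c) * cmod (x $ i) + cmod c * cmod (coord_sum x - x $ i)"
    by (metis norm_mult norm_triangle_ineq)
  also have "\<dots> \<le> cmod (1 + c) * 1 + cmod c * 2"
    using linf_component_le[of x i] assms coord_sum_minus_component_le[OF assms, of i]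
    by (intro add_mono mult_left_mono) simp_all
  finally show ?thesis by simp
qed

definition Qproj :: "complex ^ 3 \<Rightarrow> complex ^ 3 \<Rightarrow> complex ^ 3" where
  "Qproj w x = Pproj x + (coord_sum x / 3) *s w"

lemma Pproj_component: "Pproj x $ i = x $ i - coord_sum x / 3"
  by (simp add: Pproj_def coord_sum_def)

lemma Qproj_component: "Qproj w x $ i = x $ i + coord_sum x * ((w $ i - 1) / 3)"
  by (simp add: Qproj_def Pproj_component field_simps)

lemma Pproj_eq_Qproj_0: "Pproj = Qproj 0"
  by (simp add: fun_eq_iff Qproj_def)

lemma Pproj_in_Vsub: "Pproj x \<in> Vsub"
  by (simp add: Vsub_def Pproj_component coord_sum_def algebra_simps)

lemma Qproj_in_projs:
  assumes "w \<in> Vsub" shows "Qproj w \<in> projs"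
proof -
  have "is_clinear (Qproj w)"
    unfolding is_clinear_def by (auto simp: vec_eq_iff Qproj_component coord_sum_def field_simps)
  moreover have "Qproj w x \<in> Vsub" for x
  proof -
    have "Qproj w x $ 1 + Qproj w x $ 2 + Qproj w x $ 3
        = coord_sum x / 3 * (w $ 1 + w $ 2 + w $ 3)"
      by (simp add: Qproj_component coord_sum_def field_simps)
    with assms show ?thesis by (simp add: Vsub_def)
  qed
  moreover have "Qproj w v = v" if "v \<in> Vsub" for v
    using that by (simp add: vec_eq_iff Qproj_component Vsub_def coord_sum_def)
  ultimately show ?thesis by (simp add: projs_def)
qed

lemma projs_eq_Qproj:
  assumes "Q \<in> projs" shows "Q = Qproj (Q (\<chi> i. 1))"
proof
  fix x
  have lin: "is_clinear Q" and fix_V: "\<And>v. v \<in> Vsub \<Longrightarrow> Q v = v"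
    using assms by (auto simp: projs_def)
  have "x = Pproj x + (coord_sum x / 3) *s (\<chi> i. 1)"
    by (simp add: vec_eq_iff Pproj_component)
  then have "Q x = Q (Pproj x) + (coord_sum x / 3) *s Q (\<chi> i. 1)"
    using lin unfolding is_clinear_def by metis
  then show "Q x = Qproj (Q (\<chi> i. 1)) x"
    by (simp add: fix_V Pproj_in_Vsub Qproj_def)
qed

lemma Qproj_bound:
  assumes "linf x \<le> 1" shows "linf (Qproj w x) \<le> 4/3 + linf w"
proof (rule linf_leI)
  fix i
  have "cmod (Qproj w x $ i) \<le> cmod ((w $ i + 2) / 3) + 2 * cmod ((w $ i - 1) / 3)"
    using component_plus_coord_sum_le[OF assms, of i "(w $ i - 1) / 3"]
    by (simp add: Qproj_component field_simps)
  also have "\<dots> \<le> (cmod (w $ i) + 2) / 3 + 2 * ((cmod (w $ i) + 1) / 3)"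
    using norm_triangle_ineq[of "w $ i" 2] norm_triangle_ineq4[of "w $ i" 1]
    by (intro add_mono) (auto simp: norm_divide)
  also have "\<dots> = 4/3 + cmod (w $ i)"
    by (simp add: field_simps)
  also have "\<dots> \<le> 4/3 + linf w"
    using linf_component_le[of w i] by simp
  finally show "cmod (Qproj w x $ i) \<le> 4/3 + linf w" .
qed

lemma Qproj_bound_imaginary:
  assumes "\<And>i. Re (w $ i) = 0" and "linf x \<le> 1"
  shows "linf (Qproj w x) \<le> 4/3 + 5/12 * (linf w)\<^sup>2"
proof (rule linf_leI)
  fix i
  define u where "u = Im (w $ i) / 3"
  have c: "(w $ i - 1) / 3 = Complex (-1/3) u" and c1: "1 + Complex (-1/3) u = Complex (2/3) u"
    using assms(1)[of i] by (simp_all add: u_def complex_eq_iff)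
  have "cmod (Qproj w x $ i) \<le> cmod (Complex (2/3) u) + 2 * cmod (Complex (-1/3) u)"
    using component_plus_coord_sum_le[OF assms(2), of i "(w $ i - 1) / 3"]
    unfolding Qproj_component c c1 .
  also have "\<dots> \<le> (2/3 + u\<^sup>2 / (4/3)) + 2 * (1/3 + u\<^sup>2 / (2/3))"
    using cmod_Complex_le[of "2/3" u] cmod_Complex_le[of "-1/3" u] by simp
  also have "\<dots> = 4/3 + 5/12 * (cmod (w $ i))\<^sup>2"
    using assms(1)[of i] by (simp add: u_def cmod_def power_divide)
  also have "\<dots> \<le> 4/3 + 5/12 * (linf w)\<^sup>2"
    using linf_component_le[of w i] by (simp add: power_mono)
  finally show "cmod (Qproj w x $ i) \<le> 4/3 + 5/12 * (linf w)\<^sup>2" .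
qed

lemma numrad_Qproj_ge:
  assumes "w \<in> Vsub" shows "4/3 \<le> numrad (Qproj w)"
proof -
  define xk :: "3 \<Rightarrow> complex ^ 3" where "xk k = (\<chi> i. if i = k then 1 else -1)" for k
  have linf_xk: "linf (xk k) = 1" for k
    using linf_leI[of "xk k" 1] linf_component_le[of "xk k" k] by (simp add: xk_def)
  have "coord_sum (xk k) = -1" for k
    using exhaust_3[of k] by (auto simp: coord_sum_def xk_def)
  then have "Qproj w (xk k) $ k = 4/3 - w $ k / 3" for k
    by (simp add: Qproj_component field_simps) (simp add: xk_def)
  moreover have "linf x = 1 \<Longrightarrow> linf (Qproj w x) \<le> 4/3 + linf w" for x
    using Qproj_bound by simp
  ultimately have "cmod (4/3 - w $ k / 3) \<le> numrad (Qproj w)" for k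
    using numrad_ge_component[of "Qproj w" "4/3 + linf w" "xk k" k] linf_xk
    by (simp add: xk_def)
  moreover have "4/3 - Re (w $ k) / 3 \<le> cmod (4/3 - w $ k / 3)" for k
    using complex_Re_le_cmod[of "4/3 - w $ k / 3"] by simp
  ultimately have re: "4/3 - Re (w $ k) / 3 \<le> numrad (Qproj w)" for k
    by (meson order_trans)
  have "Re (w $ 1) + Re (w $ 2) + Re (w $ 3) = 0"
    using assms by (simp add: Vsub_def flip: plus_complex.sel)
  then show ?thesis using re[of 1] re[of 2] re[of 3] by linarith
qed

lemma numrad_Qproj_minus_Pproj_ge: "cmod (w $ k) \<le> numrad (\<lambda>x. Qproj w x - Pproj x)"
proof -
  have diff: "Qproj w x - Pproj x = (coord_sum x / 3) *s w" for x
    by (simp add: Qproj_def)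
  have "linf ((coord_sum x / 3) *s w) \<le> linf w" if "linf x = 1" for x
  proof (rule linf_leI)
    fix i
    have "cmod (coord_sum x / 3) * cmod (w $ i) \<le> 1 * linf w"
      using coord_sum_le[of x] that linf_component_le[of w i]
      by (intro mult_mono) (auto simp: norm_divide)
    then show "cmod (((coord_sum x / 3) *s w) $ i) \<le> linf w" by (simp add: norm_mult)
  qed
  from numrad_ge_component[of "\<lambda>x. (coord_sum x / 3) *s w", OF this linf_ones]
  show ?thesis
    by (simp add: diff coord_sum_def)
qed

lemma Pproj_bound: "linf x \<le> 1 \<Longrightarrow> linf (Pproj x) \<le> 4/3"
  using Qproj_bound[of x 0] linf_leI[of 0 0] by (simp add: Pproj_eq_Qproj_0)

lemma numrad_Pproj: "numrad Pproj = 4/3"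
proof (rule antisym)
  show "numrad Pproj \<le> 4/3" by (rule numrad_le, rule Pproj_bound) simp
  show "4/3 \<le> numrad Pproj"
    using numrad_Qproj_ge[of 0] by (simp add: Pproj_eq_Qproj_0 Vsub_def)
qed

lemma opnorm_Pproj: "opnorm Pproj = 4/3"
proof -
  define x :: "complex ^ 3" where "x = (\<chi> i. if i = 1 then 1 else -1)"
  have bound: "linf (Pproj y) \<le> 4/3" if "linf y = 1" for y
    using Pproj_bound that by simp
  have "linf x = 1"
    using linf_leI[of x 1] linf_component_le[of x 1] by (simp add: x_def)
  then have "linf (Pproj x) \<le> opnorm Pproj"
    using opnorm_ge[where T = Pproj and B = "4/3"] bound by blast
  moreover have "cmod (Pproj x $ 1) = 4/3"
    by (simp add: Pproj_def x_def)
  ultimately have "4/3 \<le> opnorm Pproj"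
    using linf_component_le[of "Pproj x" 1] by linarith
  moreover have "opnorm Pproj \<le> 4/3"
    by (rule opnorm_le, rule bound)
  ultimately show ?thesis by simp
qed

lemma Pproj_not_strongly_unique:
  assumes "r > 0"
  shows "\<exists>Q\<in>projs. numrad Q < numrad Pproj + r * numrad (\<lambda>x. Q x - Pproj x)"
proof
  define w :: "complex ^ 3" where "w = vector [Complex 0 r, Complex 0 (-r), 0]"
  have w: "w $ 1 = Complex 0 r" "w $ 2 = Complex 0 (-r)" "w $ 3 = 0"
    by (simp_all add: w_def)
  then show "Qproj w \<in> projs"
    by (intro Qproj_in_projs) (simp add: Vsub_def complex_eq_iff)
  have "Re (w $ i) = 0" and "cmod (w $ i) \<le> r" for i
    using exhaust_3[of i] w assms by (auto simp: cmod_def)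
  then have "numrad (Qproj w) \<le> 4/3 + 5/12 * (linf w)\<^sup>2"
    by (intro numrad_le Qproj_bound_imaginary) auto
  also have "\<dots> \<le> 4/3 + 5/12 * r\<^sup>2"
    using linf_leI[of w r] \<open>\<And>i. cmod (w $ i) \<le> r\<close> linf_component_le[of w 1]
    by (simp add: power_mono order_trans[OF norm_ge_zero])
  also have "\<dots> < 4/3 + r * r"
    using assms by (simp add: power2_eq_square)
  also have "\<dots> \<le> numrad Pproj + r * numrad (\<lambda>x. Qproj w x - Pproj x)"
    using numrad_Qproj_minus_Pproj_ge[of w 1] assms w
    by (simp add: numrad_Pproj cmod_def)
  finally show "numrad (Qproj w) < numrad Pproj + r * numrad (\<lambda>x. Qproj w x - Pproj x)" .
qed

theorem mainTheorem8:
  shows "Pproj \<in> projs \<and> numrad Pproj = 4/3 \<and> opnorm Pproj = 4/3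
    \<and> (\<forall>Q\<in>projs. numrad Pproj \<le> numrad Q)
    \<and> \<not> (\<exists>r>0. \<forall>Q\<in>projs. numrad Q \<ge> numrad Pproj + r * numrad (\<lambda>x. Q x - Pproj x))"
proof -
  have "Pproj \<in> projs"
    using Qproj_in_projs[of 0] by (simp add: Pproj_eq_Qproj_0 Vsub_def)
  moreover have "numrad Pproj \<le> numrad Q" if "Q \<in> projs" for Q
    using numrad_Qproj_ge[of "Q (\<chi> i. 1)"] projs_eq_Qproj[OF that] that
    by (simp add: numrad_Pproj projs_def)
  moreover have "\<not> (\<exists>r>0. \<forall>Q\<in>projs. numrad Q \<ge> numrad Pproj + r * numrad (\<lambda>x. Q x - Pproj x))"
    using Pproj_not_strongly_unique by (meson not_le)
  ultimately show ?thesis using numrad_Pproj opnorm_Pproj by blast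
qed

end
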